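(* Let $E$ be a finite set. For every $\mathcal{W}\subseteq\{+,-,0\}^E$ one has $\mathcal{P}(\mathcal{W})\subseteq\mathcal{Q}(\mathcal{W})$.
   Context: For $X\in\{+,-,0\}^E$: $X^+=\{e:X_e=+\}$, $X^-=\{e:X_e=-\}$, support $\underline{X}=X^+\cup X^-$; $(-X)_e=-X_e$; composition $(X\circ Y)_e=X_e$ if $X_e\neq0$, else $Y_e$; $S(X,Y)=(X^+\cap Y^-)\cup(X^-\cap Y^+)$. Sum: $(X+Y)_e=0$ if $e\in S(X,Y)$, else $(X\circ Y)_e$. For $X,Y$ with $\underline{X}=\underline{Y}$, $X\neq Y$, $e\in S(X,Y)$: $I_e(X,Y)=\{V : \underline{V}\subseteq\underline{X}\setminus\{e\}, V_f=X_f\ \forall f\notin S(X,Y)\}$ and $I(X,Y)=\bigcup_{e\in S(X,Y)}I_e(X,Y)$. For arbitrary $X,Y$ and $e\in S(X,Y)$: $I'_e(X,Y)=\{V : \underline{V}\subseteq(\underline{X}\cup\underline{Y})\setminus\{e\}, V_f=(X\circ Y)_f\ \forall f\notin S(X,Y)\}$, and $I'(X,Y)=\bigcup_{e\in S(X,Y)}I'_e(X,Y)$ (empty if $S(X,Y)=\emptyset$). $\mathrm{asym}(\mathcal{W})=\{V\in\mathcal{W}:-V\notin\mathcal{W}\}$; $\mathcal{P}(\mathcal{W})=\{X+(-Y): X,Y\in\mathrm{asym}(\mathcal{W}), \underline{X}=\underline{Y}, I(X,-Y)\cap\mathcal{W}=I(-X,Y)\cap\mathcal{W}=\emptyset\}$;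 $\mathcal{Q}(\mathcal{W})=\{X+(-Y): X,Y\in\mathcal{W}, I'(X,-Y)\cap\mathcal{W}=I'(-X,Y)\cap\mathcal{W}=\emptyset\}$. *)

theory Defs
  imports Main
begin

datatype sign = Pos | Neg | Zero

text \<open>Sign vectors in {+,-,0}^E are functions from the ground set (a finite type 'e) to sign.\<close>

type_synonym 'e svec = "'e \<Rightarrow> sign"

definition pos_part :: "'e svec \<Rightarrow> 'e set" where
  "pos_part X = {e. X e = Pos}"

definition neg_part :: "'e svec \<Rightarrow> 'e set" where
  "neg_part X = {e. X e = Neg}"

definition supp :: "'e svec \<Rightarrow> 'e set" where
  "supp X = pos_part X \<union> neg_part X"

fun sneg :: "sign \<Rightarrow> sign" where
  "sneg Pos = Neg" | "sneg Neg = Pos" | "sneg Zero = Zero"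

definition vneg :: "'e svec \<Rightarrow> 'e svec" where
  "vneg X = (\<lambda>e. sneg (X e))"

definition comp :: "'e svec \<Rightarrow> 'e svec \<Rightarrow> 'e svec" where
  "comp X Y = (\<lambda>e. if X e \<noteq> Zero then X e else Y e)"

definition sep :: "'e svec \<Rightarrow> 'e svec \<Rightarrow> 'e set" where
  "sep X Y = (pos_part X \<inter> neg_part Y) \<union> (neg_part X \<inter> pos_part Y)"

definition vsum :: "'e svec \<Rightarrow> 'e svec \<Rightarrow> 'e svec" where
  "vsum X Y = (\<lambda>e. if e \<in> sep X Y then Zero else comp X Y e)"

text \<open>I_e(X,Y) (used when supp X = supp Y, X \<noteq> Y).\<close>
definition I_e :: "'e \<Rightarrow> 'e svec \<Rightarrow> 'e svec \<Rightarrow> 'e svec set" where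
  "I_e e X Y = {V. supp V \<subseteq> supp X - {e} \<and> (\<forall>f. f \<notin> sep X Y \<longrightarrow> V f = X f)}"

definition I_set :: "'e svec \<Rightarrow> 'e svec \<Rightarrow> 'e svec set" where
  "I_set X Y = (\<Union>e\<in>sep X Y. I_e e X Y)"

definition I'_e :: "'e \<Rightarrow> 'e svec \<Rightarrow> 'e svec \<Rightarrow> 'e svec set" where
  "I'_e e X Y = {V. supp V \<subseteq> (supp X \<union> supp Y) - {e} \<and>
                    (\<forall>f. f \<notin> sep X Y \<longrightarrow> V f = comp X Y f)}"

definition I'_set :: "'e svec \<Rightarrow> 'e svec \<Rightarrow> 'e svec set" where
  "I'_set X Y = (\<Union>e\<in>sep X Y. I'_e e X Y)"

definition asym :: "'e svec set \<Rightarrow> 'e svec set" where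
  "asym W = {V \<in> W. vneg V \<notin> W}"

definition P_set :: "'e svec set \<Rightarrow> 'e svec set" where
  "P_set W = {vsum X (vneg Y) | X Y. X \<in> asym W \<and> Y \<in> asym W \<and> supp X = supp Y \<and>
      I_set X (vneg Y) \<inter> W = {} \<and> I_set (vneg X) Y \<inter> W = {}}"

definition Q_set :: "'e svec set \<Rightarrow> 'e svec set" where
  "Q_set W = {vsum X (vneg Y) | X Y. X \<in> W \<and> Y \<in> W \<and>
      I'_set X (vneg Y) \<inter> W = {} \<and> I'_set (vneg X) Y \<inter> W = {}}"

end

theory Submission
  imports Defs
begin

text \<open>On a pair of sign vectors with equal supports, composition is the first vector, so the
  sets I' and I coincide; the defining conditions of P then become those of Q, and asymmetric
  members of W are members of W.\<close>

lemma supp_vneg [simp]: "supp (vneg X) = supp X"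
  unfolding supp_def pos_part_def neg_part_def vneg_def
  by (auto elim: sneg.elims)

lemma zero_iff_notin_supp: "X e = Zero \<longleftrightarrow> e \<notin> supp X"
  by (cases "X e") (auto simp: supp_def pos_part_def neg_part_def)

lemma comp_eq_left_if_supp_eq:
  assumes "supp X = supp Y"
  shows "comp X Y = X"
proof
  fix e
  show "comp X Y e = X e"
    using assms zero_iff_notin_supp [of X e] zero_iff_notin_supp [of Y e]
    by (auto simp: comp_def)
qed

lemma I'_set_eq_I_set_if_supp_eq:
  assumes "supp X = supp Y"
  shows "I'_set X Y = I_set X Y"
  using assms
  unfolding I'_set_def I_set_def I'_e_def I_e_def
  by (simp add: comp_eq_left_if_supp_eq)

theorem corollary5p1:
  fixes W :: "('e::finite) svec set"
  shows "P_set W \<subseteq> Q_set W"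
proof
  fix Z assume "Z \<in> P_set W"
  then obtain X Y where Z: "Z = vsum X (vneg Y)"
    and X: "X \<in> asym W" and Y: "Y \<in> asym W" and supp_eq: "supp X = supp Y"
    and "I_set X (vneg Y) \<inter> W = {}" and "I_set (vneg X) Y \<inter> W = {}"
    unfolding P_set_def by blast
  moreover have "I'_set X (vneg Y) = I_set X (vneg Y)" "I'_set (vneg X) Y = I_set (vneg X) Y"
    using supp_eq by (simp_all add: I'_set_eq_I_set_if_supp_eq)
  moreover have "X \<in> W" "Y \<in> W"
    using X Y by (simp_all add: asym_def)
  ultimately show "Z \<in> Q_set W"
    unfolding Q_set_def by blast
qed

end
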